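(* Suppose $p_1,p_2,p_3\in V$ have Gram matrix $\begin{pmatrix}1&t_1&t\\ t_1&1&t_2\overline\lambda\\ t&t_2\lambda&1\end{pmatrix}$ (i.e. $\langle p_i,p_j\rangle$ is the $(i,j)$ entry), where $t,t_1,t_2>1$, $|\lambda|=1$, $\lambda\ne1$. Put $m_1:=\frac{p_1-p_2}{\sqrt{2(t_1-1)}}$ and $m_2:=\frac{\lambda p_2-p_3}{\sqrt{2(t_2-1)}}$. Then $$\mathrm{Re}\frac{\langle p_1,m_2\rangle\langle m_1,m_1\rangle}{\langle m_1,m_2\rangle\langle p_1,m_1\rangle}=1+\frac{t^2-tt_1+t_1^2-(t_2-1)^2+tt_1(1-2\mathrm{Re}\lambda)}{(t_1+t_2-1)^2+t^2-2t(t_1+t_2-1)\mathrm{Re}\lambda},$$ $$\mathrm{tr}\big(R(m_2)R(m_1)R(p_1)\big)=2t(\overline\lambda-1)+\frac{2tt_1-t-t_1+1-2t_2}{t_1-1}-\frac{t^2-tt_1+t_1^2-(t_2-1)^2+t(t_1+t_2-1)(1-2\mathrm{Re}\lambda)}{(t_1-1)(t_2-1)}.$$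
   Context: $V$ is a $3$-dimensional complex vector space with a hermitian form $\langle-,-\rangle$ (linear in the first argument) of signature $++-$. For nonisotropic $p\in V$, $R(p)$ is the linear map $x\mapsto 2\frac{\langle x,p\rangle}{\langle p,p\rangle}p-x$. *)

theory Defs
  imports "HOL-Analysis.Analysis"
begin

type_synonym cvec = "complex ^ 3"

definition hermitian_form :: "(cvec \<Rightarrow> cvec \<Rightarrow> complex) \<Rightarrow> bool" where
  "hermitian_form h \<longleftrightarrow>
     (\<forall>x y z. h (x + y) z = h x z + h y z) \<and>
     (\<forall>c x z. h (c *s x) z = c * h x z) \<and>
     (\<forall>x y. h y x = cnj (h x y))"

text \<open>Signature (++-): there is a basis e1,e2,e3 with Gram matrix diag(1,1,-1)
  (orthogonal expansion of every vector shows it spans, hence is a basis).\<close>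
definition signature_pp_m :: "(cvec \<Rightarrow> cvec \<Rightarrow> complex) \<Rightarrow> bool" where
  "signature_pp_m h \<longleftrightarrow>
     (\<exists>e :: 3 \<Rightarrow> cvec.
        (\<forall>i j. h (e i) (e j) = (if i = j then (if i = 3 then -1 else 1) else 0)) \<and>
        (\<forall>x. x = (\<Sum>i\<in>UNIV. (h x (e i) / h (e i) (e i)) *s e i)))"

definition R :: "(cvec \<Rightarrow> cvec \<Rightarrow> complex) \<Rightarrow> cvec \<Rightarrow> cvec \<Rightarrow> cvec" where
  "R h p x = (2 * h x p / h p p) *s p - x"

definition ctrace :: "(cvec \<Rightarrow> cvec) \<Rightarrow> complex" where
  "ctrace f = (\<Sum>i\<in>UNIV. f (axis i 1) $ i)"

end

theory Submission imports Defs begin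

(* Only the Gram matrix of p1, q1 = p1 - p2 and q2 = lam p2 - p3 matters: rescaling q
   changes neither R(q) nor the quotient in the first claim, so m1, m2 may be replaced
   by q1, q2. Since R(q) f is the rank-one map x \<mapsto> 2<f x, q>/<q, q> q minus f,
   tr(R(q) f) = 2<f q, q>/<q, q> - tr f; applied three times this gives
     tr(R(c) R(b) R(a)) = 3 - 4 \<Sum> g_xy g_yx/(g_xx g_yy) + 8 g_ab g_bc g_ca/(g_aa g_bb g_cc)
   with g_xy = <x, y>. Both claims then reduce to algebra modulo lam cnj(lam) = 1. The
   denominator of the first is |cnj(lam)(t1 + t2 - 1) - t|^2, which vanishes only for
   lam = 1. *)

lemma ctrace_id: "ctrace id = 3"
  unfolding ctrace_def by (simp add: sum_3 axis_def)

lemma ctrace_diff: "ctrace (\<lambda>x. f x - g x) = ctrace f - ctrace g"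
  unfolding ctrace_def by (simp add: sum_subtractf)

context
  fixes h :: "cvec \<Rightarrow> cvec \<Rightarrow> complex"
  assumes hermitian: "hermitian_form h"
begin

lemma herm_add_left: "h (x + y) z = h x z + h y z"
  using hermitian unfolding hermitian_form_def by blast

lemma herm_scale_left: "h (c *s x) z = c * h x z"
  using hermitian unfolding hermitian_form_def by blast

lemma herm_cnj_swap: "h y x = cnj (h x y)"
  using hermitian unfolding hermitian_form_def by blast

lemma herm_add_right: "h x (y + z) = h x y + h x z"
  by (metis herm_cnj_swap herm_add_left complex_cnj_add complex_cnj_cnj)

lemma herm_scale_right: "h x (c *s y) = cnj c * h x y"
  by (metis herm_cnj_swap herm_scale_left complex_cnj_mult complex_cnj_cnj)

lemma herm_diff_left: "h (x - y) z = h x z - h y z"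
  using herm_add_left[of "x - y" y z] by simp

lemma herm_diff_right: "h x (y - z) = h x y - h x z"
  using herm_add_right[of x "y - z" z] by simp

lemma herm_sum_left: "h (sum f S) z = (\<Sum>i\<in>S. h (f i) z)"
proof (induction S rule: infinite_finite_induct)
  case (infinite S)
  then show ?case using herm_scale_left[of 0 0 z] by simp
next
  case empty
  then show ?case using herm_scale_left[of 0 0 z] by simp
next
  case (insert i S)
  then show ?case by (simp add: herm_add_left)
qed

lemmas herm_simps =
  herm_add_left herm_add_right herm_diff_left herm_diff_right herm_scale_left herm_scale_right

lemma linear_R: "Vector_Spaces.linear (*s) (*s) (R h q)"
  unfolding Vector_Spaces.linear_iff R_def
  by (simp add: vec.vector_space_axioms herm_simps distrib_left add_divide_distrib
      vector_sadd_rdistrib vector_smult_assoc vector_ssub_ldistrib algebra_simps)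

lemma R_scale_invariant: "c \<noteq> 0 \<Longrightarrow> R h (c *s q) = R h q"
  unfolding R_def fun_eq_iff by (simp add: herm_simps vec_eq_iff field_simps)

lemma ctrace_rank_one:
  assumes "Vector_Spaces.linear (*s) (*s) f"
  shows "ctrace (\<lambda>x. (c * h (f x) a) *s u) = c * h (f u) a"
proof -
  have "h (f u) a = h (f (\<Sum>i\<in>UNIV. u $ i *s axis i 1)) a"
    by (simp add: basis_expansion)
  also have "\<dots> = (\<Sum>i\<in>UNIV. h (f (axis i 1)) a * u $ i)"
    by (simp add: vec.linear_sum[OF assms] vec.linear_scale[OF assms] herm_sum_left
        herm_scale_left mult.commute)
  finally show ?thesis
    unfolding ctrace_def by (simp add: sum_distrib_left mult.assoc)
qed

lemma ctrace_R_comp: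
  assumes "Vector_Spaces.linear (*s) (*s) f"
  shows "ctrace (R h q \<circ> f) = 2 * h (f q) q / h q q - ctrace f"
proof -
  have "R h q \<circ> f = (\<lambda>x. (2 / h q q * h (f x) q) *s q - f x)"
    unfolding R_def by auto
  then have "ctrace (R h q \<circ> f) = ctrace (\<lambda>x. (2 / h q q * h (f x) q) *s q) - ctrace f"
    by (simp only: ctrace_diff)
  then show ?thesis
    unfolding ctrace_rank_one[OF assms] by simp
qed

lemma ctrace_R_R_R:
  assumes "h a a \<noteq> 0" "h b b \<noteq> 0" "h c c \<noteq> 0"
  shows "ctrace (R h c \<circ> R h b \<circ> R h a) =
    3 - 4 * (h a b * h b a / (h a a * h b b) + h b c * h c b / (h b b * h c c)
             + h c a * h a c / (h c c * h a a))
      + 8 * h a b * h b c * h c a / (h a a * h b b * h c c)"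
    (is "_ = ?gram_expr")
proof -
  have R_a: "ctrace (R h a) = -1"
    using ctrace_R_comp[OF vec.linear_id, of a] assms(1) by (simp add: ctrace_id)
  have R_a_b: "h (R h a b) b = 2 * h b a * h a b / h a a - h b b"
    and R_b_R_a_c: "h (R h b (R h a c)) c
      = 2 * (2 * h c a * h a b / h a a - h c b) * h b c / h b b - 2 * h c a * h a c / h a a + h c c"
    by (simp_all add: R_def herm_simps)
  have "ctrace (R h c \<circ> R h b \<circ> R h a)
      = 2 * h (R h b (R h a c)) c / h c c - ctrace (R h b \<circ> R h a)"
    using ctrace_R_comp[OF Vector_Spaces.linear_compose[OF linear_R linear_R], of c b a]
    by (simp add: o_assoc)
  also have "\<dots> = 2 * h (R h b (R h a c)) c / h c c - 2 * h (R h a b) b / h b b - 1"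
    using ctrace_R_comp[OF linear_R, of b a] R_a by simp
  also have "\<dots> = ?gram_expr"
    unfolding R_a_b R_b_R_a_c using assms by (simp add: field_simps)
  finally show ?thesis .
qed

lemma herm_ratio_scale_invariant:
  assumes "c \<noteq> 0" "d \<noteq> 0"
  shows "h p (d *s y) * h (c *s x) (c *s x) / (h (c *s x) (d *s y) * h p (c *s x))
       = h p y * h x x / (h x y * h p x)"
proof -
  have "h p (d *s y) * h (c *s x) (c *s x) / (h (c *s x) (d *s y) * h p (c *s x))
      = (c * cnj c * cnj d) * (h p y * h x x) / ((c * cnj c * cnj d) * (h x y * h p x))"
    by (simp add: herm_simps algebra_simps)
  also have "\<dots> = h p y * h x x / (h x y * h p x)"
    using assms by (subst mult_divide_mult_cancel_left) auto
  finally show ?thesis .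
qed

end

lemma cnj_unit_mult_pos_ne_pos:
  fixes lam :: complex and s T :: real
  assumes "cmod lam = 1" "lam \<noteq> 1" "s > 0" "T > 0"
  shows "cnj lam * T - s \<noteq> 0"
proof
  assume "cnj lam * T - s = 0"
  then have lam_real: "cnj lam = complex_of_real (s / T)"
    using assms(4) by (simp add: field_simps)
  then have "\<bar>s / T\<bar> = 1"
    using assms(1) by (metis complex_mod_cnj norm_of_real)
  then have "cnj lam = 1"
    using lam_real assms(3,4) by simp
  then show False
    using assms(2) by (metis complex_cnj_one complex_cnj_cnj)
qed

lemma Re_ratio_unit:
  fixes lam :: complex and t t1 t2 :: real
  assumes "cmod lam = 1" "lam \<noteq> 1" "t > 0" "t1 + t2 > 1"
  shows "Re (2 * (cnj lam * t1 - t) / (cnj lam * (t1 + t2 - 1) - t))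
    = 1 + (t^2 - t*t1 + t1^2 - (t2 - 1)^2 + t*t1*(1 - 2 * Re lam)) /
          ((t1 + t2 - 1)^2 + t^2 - 2*t*(t1 + t2 - 1) * Re lam)"
proof -
  define a b T where "a = Re lam" and "b = Im lam" and "T = t1 + t2 - 1"
  define N D where "N = t^2 - t*t1 + t1^2 - (t2 - 1)^2 + t*t1*(1 - 2 * a)"
    and "D = T^2 + t^2 - 2*t*T*a"
  have unit: "a^2 + b^2 = 1"
    using assms(1) unfolding a_def b_def cmod_def by simp
  have den: "(a*T - t)^2 + (b*T)^2 = D"
    unfolding D_def using unit by algebra
  have "cnj lam * T - t \<noteq> 0"
    using assms by (intro cnj_unit_mult_pos_ne_pos) (simp_all add: T_def)
  then have "D \<noteq> 0"
    unfolding den[symmetric] a_def b_def by (simp add: complex_eq_iff)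
  have "Re (2 * (cnj lam * t1 - t) / (cnj lam * T - t))
      = (2 * (a*t1 - t) * (a*T - t) + 2 * b*t1 * (b*T)) / ((a*T - t)^2 + (b*T)^2)"
    unfolding Re_divide a_def b_def by (simp add: power2_eq_square)
  also have "\<dots> = (D + N) / D"
    unfolding den unfolding D_def N_def T_def using unit by algebra
  also have "\<dots> = 1 + N / D"
    using \<open>D \<noteq> 0\<close> by (simp add: add_divide_distrib)
  finally show ?thesis
    unfolding N_def D_def T_def a_def by simp
qed

locale gram_triple =
  fixes h :: "cvec \<Rightarrow> cvec \<Rightarrow> complex"
    and p1 p2 p3 :: cvec and t t1 t2 :: real and lam :: complex
  assumes hermitian: "hermitian_form h"
    and p1p1: "h p1 p1 = 1" and p1p2: "h p1 p2 = t1" and p1p3: "h p1 p3 = t"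
    and p2p2: "h p2 p2 = 1" and p2p3: "h p2 p3 = t2 * cnj lam" and p3p3: "h p3 p3 = 1"
    and t_gt1: "t > 1" and t1_gt1: "t1 > 1" and t2_gt1: "t2 > 1"
    and lam_unit: "cmod lam = 1" and lam_ne1: "lam \<noteq> 1"
begin

definition q1 :: cvec where "q1 = p1 - p2"
definition q2 :: cvec where "q2 = lam *s p2 - p3"

lemma lam_mult_cnj: "lam * cnj lam = 1"
  using complex_norm_square[of lam] lam_unit by simp

lemma gram_p_swap: "h p2 p1 = t1" "h p3 p1 = t" "h p3 p2 = t2 * lam"
  by (simp_all add: herm_cnj_swap[OF hermitian, of p2 p1] herm_cnj_swap[OF hermitian, of p3 p1]
      herm_cnj_swap[OF hermitian, of p3 p2] p1p2 p1p3 p2p3)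

lemma gram_q:
  "h p1 q1 = 1 - t1" "h q1 q1 = 2 - 2 * t1" "h p1 q2 = cnj lam * t1 - t"
  "h q1 q2 = cnj lam * (t1 + t2 - 1) - t" "h q2 q2 = 2 - 2 * t2"
  using p1p1 p1p2 p1p3 p2p2 p2p3 p3p3 gram_p_swap lam_mult_cnj
  unfolding q1_def q2_def by (simp_all add: herm_simps[OF hermitian] algebra_simps)

lemma gram_q_swap:
  "h q1 p1 = 1 - t1" "h q2 p1 = lam * t1 - t" "h q2 q1 = lam * (t1 + t2 - 1) - t"
  by (simp_all add: herm_cnj_swap[OF hermitian, of q1 p1] herm_cnj_swap[OF hermitian, of q2 p1]
      herm_cnj_swap[OF hermitian, of q2 q1] gram_q)

lemma Re_ratio_q:
  "Re (h p1 q2 * h q1 q1 / (h q1 q2 * h p1 q1)) =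
     1 + (t^2 - t*t1 + t1^2 - (t2 - 1)^2 + t*t1*(1 - 2 * Re lam)) /
         ((t1 + t2 - 1)^2 + t^2 - 2*t*(t1 + t2 - 1) * Re lam)"
proof -
  have "h p1 q1 \<noteq> 0"
    using t1_gt1 unfolding gram_q by simp
  have "h p1 q2 * h q1 q1 / (h q1 q2 * h p1 q1) = h p1 q1 * (2 * h p1 q2) / (h p1 q1 * h q1 q2)"
    unfolding gram_q by (simp add: algebra_simps)
  also have "\<dots> = 2 * (cnj lam * t1 - t) / (cnj lam * (t1 + t2 - 1) - t)"
    using \<open>h p1 q1 \<noteq> 0\<close> unfolding gram_q by (subst mult_divide_mult_cancel_left) simp_all
  finally show ?thesis
    using Re_ratio_unit lam_unit lam_ne1 t_gt1 t1_gt1 t2_gt1 by simp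
qed

lemma ctrace_R_q:
  "ctrace (R h q2 \<circ> R h q1 \<circ> R h p1) =
     2 * t * (cnj lam - 1)
     + complex_of_real ((2*t*t1 - t - t1 + 1 - 2*t2) / (t1 - 1))
     - complex_of_real ((t^2 - t*t1 + t1^2 - (t2 - 1)^2 + t*(t1 + t2 - 1)*(1 - 2 * Re lam))
                        / ((t1 - 1) * (t2 - 1)))"
proof -
  \<comment> \<open>With \<open>t1 - 1\<close> and \<open>t2 - 1\<close> as atoms, \<open>field_simps\<close> can clear the denominators.\<close>
  define u v where "u = complex_of_real t1 - 1" and "v = complex_of_real t2 - 1"
  then have uv: "complex_of_real t1 = u + 1" "complex_of_real t2 = v + 1"
    by simp_all
  have "u \<noteq> 0" "v \<noteq> 0"
    using t1_gt1 t2_gt1 unfolding u_def v_def by auto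
  have nonisotropic: "h p1 p1 \<noteq> 0" "h q1 q1 \<noteq> 0" "h q2 q2 \<noteq> 0"
    using t1_gt1 t2_gt1 unfolding p1p1 gram_q by auto
  have Re_lam: "complex_of_real (Re lam) = (lam + cnj lam) / 2"
    by (simp add: complex_add_cnj)
  show ?thesis
    unfolding ctrace_R_R_R[OF hermitian nonisotropic] gram_q gram_q_swap p1p1
    unfolding of_real_add of_real_diff of_real_mult of_real_divide of_real_power of_real_1
      of_real_numeral Re_lam uv
    using \<open>u \<noteq> 0\<close> \<open>v \<noteq> 0\<close> lam_mult_cnj by (simp add: field_simps) algebra
qed

end

theorem lemma4p4:
  fixes h :: "cvec \<Rightarrow> cvec \<Rightarrow> complex"
    and p1 p2 p3 m1 m2 :: cvec and t t1 t2 :: real and lam :: complex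
  assumes "hermitian_form h" and "signature_pp_m h"
    and "h p1 p1 = 1" and "h p1 p2 = t1" and "h p1 p3 = t"
    and "h p2 p1 = t1" and "h p2 p2 = 1" and "h p2 p3 = t2 * cnj lam"
    and "h p3 p1 = t" and "h p3 p2 = t2 * lam" and "h p3 p3 = 1"
    and "t > 1" and "t1 > 1" and "t2 > 1"
    and "cmod lam = 1" and "lam \<noteq> 1"
    and "m1 = (1 / complex_of_real (sqrt (2 * (t1 - 1)))) *s (p1 - p2)"
    and "m2 = (1 / complex_of_real (sqrt (2 * (t2 - 1)))) *s (lam *s p2 - p3)"
  shows "(Re ((h p1 m2 * h m1 m1) / (h m1 m2 * h p1 m1)) =
           1 + (t^2 - t*t1 + t1^2 - (t2 - 1)^2 + t*t1*(1 - 2 * Re lam)) /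
               ((t1 + t2 - 1)^2 + t^2 - 2*t*(t1 + t2 - 1) * Re lam)) \<and>
         (ctrace (R h m2 \<circ> R h m1 \<circ> R h p1) =
           2 * t * (cnj lam - 1)
           + complex_of_real ((2*t*t1 - t - t1 + 1 - 2*t2) / (t1 - 1))
           - complex_of_real ((t^2 - t*t1 + t1^2 - (t2 - 1)^2 + t*(t1 + t2 - 1)*(1 - 2 * Re lam))
                              / ((t1 - 1) * (t2 - 1))))"
proof -
  interpret gram_triple h p1 p2 p3 t t1 t2 lam
    using assms by unfold_locales auto
  define c1 c2 :: complex
    where "c1 = 1 / complex_of_real (sqrt (2 * (t1 - 1)))"
      and "c2 = 1 / complex_of_real (sqrt (2 * (t2 - 1)))"
  have "c1 \<noteq> 0" "c2 \<noteq> 0"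
    using assms(13,14) unfolding c1_def c2_def by auto
  have m: "m1 = c1 *s q1" "m2 = c2 *s q2"
    using assms(17,18) unfolding c1_def c2_def q1_def q2_def by simp_all
  have "h p1 m2 * h m1 m1 / (h m1 m2 * h p1 m1) = h p1 q2 * h q1 q1 / (h q1 q2 * h p1 q1)"
    unfolding m using herm_ratio_scale_invariant[OF hermitian \<open>c1 \<noteq> 0\<close> \<open>c2 \<noteq> 0\<close>] .
  moreover have "R h m2 \<circ> R h m1 \<circ> R h p1 = R h q2 \<circ> R h q1 \<circ> R h p1"
    unfolding m using R_scale_invariant[OF hermitian] \<open>c1 \<noteq> 0\<close> \<open>c2 \<noteq> 0\<close> by simp
  ultimately show ?thesis
    using Re_ratio_q ctrace_R_q by simp
qed

end
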